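(* With the notation of the context, there is a constant $L>0$ depending only on $a$ and $b$ such that for every integer $m\ge\max\{-\frac{3}{4\ln u},\frac1{6c}\}$, the truncated vector $\alpha$ defined by $\alpha_k=\nu_k$ for $k\le2m+1$ and $\alpha_k=0$ otherwise satisfies: (i) $\big|\|\alpha\|^2-\frac1{4a}\big|\le Lmu^{2m}$; (ii) $\alpha^\top\eta=0$; (iii) $\big|\alpha^\top M^\top M\alpha-1\big|\le Lm^2u^{2m}$; (iv) $\alpha^\top\mathrm{Diag}(\lambda)^{-1}\alpha\le Lm^{3/2}$.
   Context: Let $a,b>0$, $\mu=\mathcal N(0,1/(4a))$ on $\mathbb R$, $c=\sqrt{a^2+2ab}$, $u=\frac{b}{a+b+c}\in(0,1)$. $f_i(x)=(c/a)^{1/4}(2^ii!)^{-1/2}e^{-(c-a)x^2}H_i(\sqrt{2c}\,x)$ ($H_i$ physicists' Hermite polynomials) form an orthonormal basis of $L^2(\mu)$; $\lambda_i=\sqrt{\frac{2a}{a+b+c}}\,u^i$. $\eta_i=\int f_id\mu$: $\eta_{2k+1}=0$, $\eta_{2k}=(c/a)^{1/4}\sqrt{\frac{2a}{a+c}}u^k\frac{\sqrt{(2k)!}}{2^kk!}$. $M^\top M$ is the symmetric matrix with $(M^\top M)_{ii}=\frac1c(2i(a^2+c^2)+(a-c)^2)$, $(M^\top M)_{i,i+2}=(M^\top M)_{i+2,i}=\frac1c(a^2-c^2)\sqrt{(i+1)(i+2)}$, other entries zero (so $\mathbb E_\mu(f'^2)=\beta^\top M^\top M\beta$ for $f=\sum\beta_if_i$).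 $\nu$ is the coefficient vector of $f_*(x)=x$: $\nu_{2k}=0$, $\nu_{2k+1}=(c/a)^{1/4}\frac{\sqrt a}{2c}\big(\frac{2c}{a+c}\big)^{3/2}u^k\frac{\sqrt{(2k+1)!}}{2^kk!}$. *)

theory Defs
  imports "HOL-Analysis.Analysis"
begin

definition cc :: "real \<Rightarrow> real \<Rightarrow> real" where
  "cc a b = sqrt (a^2 + 2*a*b)"

definition uu :: "real \<Rightarrow> real \<Rightarrow> real" where
  "uu a b = b / (a + b + cc a b)"

definition lam :: "real \<Rightarrow> real \<Rightarrow> nat \<Rightarrow> real" where
  "lam a b i = sqrt (2*a / (a + b + cc a b)) * uu a b ^ i"

text \<open>eta_i = integral of f_i against mu.\<close>
definition eta :: "real \<Rightarrow> real \<Rightarrow> nat \<Rightarrow> real" where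
  "eta a b i = (if even i then
     (let k = i div 2; c = cc a b in
       (c/a) powr (1/4) * sqrt (2*a/(a+c)) * uu a b ^ k
         * sqrt (fact (2*k)) / (2^k * fact k))
   else 0)"

definition MtM :: "real \<Rightarrow> real \<Rightarrow> nat \<Rightarrow> nat \<Rightarrow> real" where
  "MtM a b i j = (let c = cc a b in
     if i = j then (2 * real i * (a^2 + c^2) + (a - c)^2) / c
     else if j = i + 2 then (a^2 - c^2) * sqrt ((real i + 1) * (real i + 2)) / c
     else if i = j + 2 then (a^2 - c^2) * sqrt ((real j + 1) * (real j + 2)) / c
     else 0)"

text \<open>Coefficient vector nu of f_*(x) = x.\<close>
definition nu :: "real \<Rightarrow> real \<Rightarrow> nat \<Rightarrow> real" where
  "nu a b i = (if odd i then
     (let k = i div 2; c = cc a b in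
       (c/a) powr (1/4) * sqrt a / (2*c) * (2*c/(a+c)) powr (3/2) * uu a b ^ k
         * sqrt (fact (2*k+1)) / (2^k * fact k))
   else 0)"

definition alpha :: "real \<Rightarrow> real \<Rightarrow> nat \<Rightarrow> nat \<Rightarrow> real" where
  "alpha a b m k = (if k \<le> 2*m+1 then nu a b k else 0)"

end

theory Submission
  imports Defs
begin

(*
  Only the odd coefficients of nu are nonzero, and nu(2j+1)^2 = K t_j u^(2j), where
  t_j = (3/2)_j / j! are the Taylor coefficients of (1 - x)^(-3/2). The band structure of
  M^T M turns every quantity in the theorem into a partial sum of the series
  sum t_j (y (2j+3) + z) x^j, which the binomial series sums in closed form:
  3 y (1-x)^(-5/2) + z (1-x)^(-3/2). At x = u^2 the full sums are exactly 1/(4a) and 1,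
  and since t_j <= 2j+1 the tails are O(m u^(2m)) and O(m^2 u^(2m)). In (iv) the factor
  u^(2j) of lambda(2j+1) cancels, leaving a multiple of sum_{j<=m} t_j <= 4 m^(3/2),
  because t_j^2 <= 2j+1. Orthogonality to eta holds since alpha and eta have disjoint supports.
*)

lemma summable_poly_geometric:
  fixes r :: real
  assumes "\<bar>r\<bar> < 1"
  shows "summable (\<lambda>n. (real n + 1) ^ p * r ^ n)"
proof (rule summable_in_conv_radius)
  have "(\<lambda>n. (real n + 1) / (real n + 2)) \<longlonglongrightarrow> 1"
    using LIMSEQ_Suc[OF LIMSEQ_n_over_Suc_n] by (simp add: add_ac)
  from tendsto_power[OF this, of p]
  have "(\<lambda>n. ((real n + 1) / (real n + 2)) ^ p) \<longlonglongrightarrow> 1" by simp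
  then have "conv_radius (\<lambda>n. (real n + 1) ^ p) = 1"
    by (intro conv_radius_ratio_limit_nonzero) (simp_all add: power_divide add_ac)
  then show "ereal (norm r) < conv_radius (\<lambda>n. (real n + 1) ^ p)"
    using assms by simp
qed

lemma abs_sums_minus_partial_le:
  fixes f :: "nat \<Rightarrow> real"
  assumes fs: "f sums s" and r: "0 \<le> r" "r < 1"
    and bd: "\<And>j. \<bar>f j\<bar> \<le> B * (real j + 1) ^ p * r ^ j"
  shows "\<bar>s - (\<Sum>j<n. f j)\<bar> \<le> B * (\<Sum>i. (real i + 1) ^ p * r ^ i) * ((real n + 1) ^ p * r ^ n)"
proof -
  define g where "g i = (real i + 1) ^ p * r ^ i" for i
  have g: "summable g"
    unfolding g_def using r by (intro summable_poly_geometric) simp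
  have B: "B \<ge> 0"
    using bd[of 0] abs_ge_zero[of "f 0"] by simp
  have "s - (\<Sum>j<n. f j) = (\<Sum>i. f (i + n))"
    using suminf_minus_initial_segment[OF sums_summable[OF fs]] fs by (simp add: sums_iff)
  moreover have fn: "\<bar>f (i + n)\<bar> \<le> B * g n * g i" for i
  proof -
    have "\<bar>f (i + n)\<bar> \<le> B * (real (i + n) + 1) ^ p * r ^ (i + n)" by (rule bd)
    also have "\<dots> \<le> B * ((real n + 1) * (real i + 1)) ^ p * r ^ (i + n)"
      using B r by (intro mult_right_mono mult_left_mono power_mono) (auto simp: algebra_simps)
    also have "\<dots> = B * g n * g i"
      by (simp add: g_def power_mult_distrib power_add mult_ac)
    finally show ?thesis .
  qed
  moreover have Bg: "summable (\<lambda>i. B * g n * g i)"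
    using g by (rule summable_mult)
  moreover have f_abs: "summable (\<lambda>i. \<bar>f (i + n)\<bar>)"
    by (rule summable_comparison_test[OF _ Bg]) (use fn in auto)
  ultimately have "\<bar>s - (\<Sum>j<n. f j)\<bar> \<le> (\<Sum>i. B * g n * g i)"
    using summable_rabs[OF f_abs] suminf_le[OF fn f_abs Bg] by simp
  also have "\<dots> = B * suminf g * g n"
    using suminf_mult[OF g, of "B * g n"] by (simp add: mult_ac)
  finally show ?thesis unfolding g_def .
qed

lemma poly_geometric_tail_bound:
  fixes f :: "nat \<Rightarrow> real"
  assumes fs: "f sums s" and r: "0 \<le> r" "r < 1"
    and bd: "\<And>j. \<bar>f j\<bar> \<le> B * (real j + 1) ^ p * r ^ j"
  shows "\<exists>C. \<forall>n\<ge>1. \<bar>s - (\<Sum>j<n. f j)\<bar> \<le> C * real n ^ p * r ^ n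
                  \<and> \<bar>s - (\<Sum>j\<le>n. f j)\<bar> \<le> C * real n ^ p * r ^ n"
proof -
  define BD where "BD = B * (\<Sum>i. (real i + 1) ^ p * r ^ i)"
  have "0 \<le> B" using bd[of 0] abs_ge_zero[of "f 0"] by simp
  moreover have "0 \<le> (\<Sum>i. (real i + 1) ^ p * r ^ i)"
    using r by (intro suminf_nonneg summable_poly_geometric) auto
  ultimately have BD: "0 \<le> BD" unfolding BD_def by simp
  have shift: "BD * ((real k + 1) ^ p * r ^ k) \<le> BD * 3 ^ p * real n ^ p * r ^ n"
    if "n \<ge> 1" "k \<in> {n, Suc n}" for n k
  proof -
    have "(real k + 1) ^ p \<le> (3 * real n) ^ p"
      using that by (intro power_mono) auto
    moreover have "r ^ k \<le> r ^ n"
      using that r by (auto intro: power_decreasing)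
    ultimately have "(real k + 1) ^ p * r ^ k \<le> 3 ^ p * real n ^ p * r ^ n"
      using r by (simp add: power_mult_distrib mult_mono)
    then show ?thesis
      using BD by (simp add: mult_left_mono mult.assoc)
  qed
  show ?thesis
  proof (intro exI[of _ "BD * 3 ^ p"] allI impI conjI)
    fix n :: nat
    assume n: "n \<ge> 1"
    show "\<bar>s - (\<Sum>j<n. f j)\<bar> \<le> BD * 3 ^ p * real n ^ p * r ^ n"
      and "\<bar>s - (\<Sum>j\<le>n. f j)\<bar> \<le> BD * 3 ^ p * real n ^ p * r ^ n"
      using abs_sums_minus_partial_le[OF fs r bd, of n] abs_sums_minus_partial_le[OF fs r bd, of "Suc n"]
        shift[OF n]
      unfolding BD_def lessThan_Suc_atMost by fastforce+
  qed
qed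

lemma poly_geometric_tail_bound_combined:
  fixes f g :: "nat \<Rightarrow> real"
  assumes f: "f sums s" and g: "g sums t" and r: "0 \<le> r" "r < 1"
    and bf: "\<And>j. \<bar>f j\<bar> \<le> B * (real j + 1) ^ p * r ^ j"
    and bg: "\<And>j. \<bar>g j\<bar> \<le> B' * (real j + 1) ^ p * r ^ j"
  shows "\<exists>C. \<forall>n\<ge>1. \<bar>(\<Sum>j\<le>n. f j) + c * (\<Sum>j<n. g j) - (s + c * t)\<bar> \<le> C * real n ^ p * r ^ n"
proof -
  obtain Cf where Cf: "\<forall>n\<ge>1. \<bar>s - (\<Sum>j\<le>n. f j)\<bar> \<le> Cf * real n ^ p * r ^ n"
    using poly_geometric_tail_bound[OF f r bf] by blast
  obtain Cg where Cg: "\<forall>n\<ge>1. \<bar>t - (\<Sum>j<n. g j)\<bar> \<le> Cg * real n ^ p * r ^ n"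
    using poly_geometric_tail_bound[OF g r bg] by blast
  show ?thesis
  proof (intro exI[of _ "Cf + \<bar>c\<bar> * Cg"] allI impI)
    fix n :: nat
    assume n: "n \<ge> 1"
    have "\<bar>(\<Sum>j\<le>n. f j) + c * (\<Sum>j<n. g j) - (s + c * t)\<bar>
        = \<bar>(s - (\<Sum>j\<le>n. f j)) + c * (t - (\<Sum>j<n. g j))\<bar>"
      by (simp add: abs_minus_commute algebra_simps)
    also have "\<dots> \<le> \<bar>s - (\<Sum>j\<le>n. f j)\<bar> + \<bar>c\<bar> * \<bar>t - (\<Sum>j<n. g j)\<bar>"
      by (metis abs_mult abs_triangle_ineq)
    also have "\<dots> \<le> Cf * real n ^ p * r ^ n + \<bar>c\<bar> * (Cg * real n ^ p * r ^ n)"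
      using Cf Cg n by (intro add_mono mult_left_mono) auto
    finally show "\<bar>(\<Sum>j\<le>n. f j) + c * (\<Sum>j<n. g j) - (s + c * t)\<bar> \<le> (Cf + \<bar>c\<bar> * Cg) * real n ^ p * r ^ n"
      by (simp add: algebra_simps)
  qed
qed

lemma sum_quadratic_form_band:
  fixes v :: "nat \<Rightarrow> 'a::comm_ring_1" and M :: "nat \<Rightarrow> nat \<Rightarrow> 'a"
  assumes sym: "\<And>i j. M i j = M j i"
    and band: "\<And>i j. i \<noteq> j \<Longrightarrow> j \<noteq> i + 2 \<Longrightarrow> i \<noteq> j + 2 \<Longrightarrow> M i j = 0"
  shows "(\<Sum>i\<le>N. \<Sum>j\<le>N. v i * M i j * v j)
       = (\<Sum>i\<le>N. v i * M i i * v i) + 2 * (\<Sum>i<N - 1. v i * M i (i + 2) * v (i + 2))"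
proof (induction N)
  case 0
  then show ?case by simp
next
  case (Suc N)
  define w where "w i = v i * M i (i + 2) * v (i + 2)" for i
  have column: "(\<Sum>i<N - 1. w i) + (\<Sum>i\<le>N. v i * M i (Suc N) * v (Suc N)) = (\<Sum>i<N. w i)"
  proof (cases N)
    case 0
    then show ?thesis using band[of 0 1] by simp
  next
    case (Suc k)
    have "(\<Sum>i\<le>N. v i * M i (Suc N) * v (Suc N)) = (\<Sum>i\<le>N. if i = k then w i else 0)"
      using Suc band by (intro sum.cong) (auto simp: w_def)
    then show ?thesis using Suc by simp
  qed
  have row: "(\<Sum>j\<le>N. v (Suc N) * M (Suc N) j * v j) = (\<Sum>i\<le>N. v i * M i (Suc N) * v (Suc N))"
    by (intro sum.cong) (simp_all add: sym[of "Suc N"] mult_ac)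
  have "(\<Sum>i\<le>Suc N. \<Sum>j\<le>Suc N. v i * M i j * v j)
      = (\<Sum>i\<le>N. \<Sum>j\<le>N. v i * M i j * v j) + 2 * (\<Sum>i\<le>N. v i * M i (Suc N) * v (Suc N))
        + v (Suc N) * M (Suc N) (Suc N) * v (Suc N)"
    unfolding sum.atMost_Suc sum.distrib row by (simp add: algebra_simps)
  also have "\<dots> = (\<Sum>i\<le>Suc N. v i * M i i * v i)
        + 2 * ((\<Sum>i<N - 1. w i) + (\<Sum>i\<le>N. v i * M i (Suc N) * v (Suc N)))"
    unfolding Suc.IH w_def by (simp add: algebra_simps)
  also have "\<dots> = (\<Sum>i\<le>Suc N. v i * M i i * v i) + 2 * (\<Sum>i<Suc N - 1. w i)"
    unfolding column by simp
  finally show ?case unfolding w_def .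
qed

text \<open>The \<open>j\<close>-th Taylor coefficient of \<open>(1 - x) powr (-3/2)\<close>, see \<open>tcoeff_linear_sums\<close>.\<close>
definition tcoeff :: "nat \<Rightarrow> real" where
  "tcoeff j = fact (2 * j + 1) / (4 ^ j * (fact j)\<^sup>2)"

lemma tcoeff_pos: "tcoeff j > 0"
  by (simp add: tcoeff_def)

lemma tcoeff_Suc: "tcoeff (Suc j) = tcoeff j * (2 * real j + 3) / (2 * real j + 2)"
proof -
  have F: "fact (2 * Suc j + 1) = (fact (2 * j + 1) :: real) * (2 * real j + 2) * (2 * real j + 3)"
    by (simp add: algebra_simps)
  have G: "(fact (Suc j) :: real) = fact j * (real j + 1)"
    by (simp add: algebra_simps)
  have cancel: "F' * (2 * x + 2) * (2 * x + 3) / (4 * P * (G' * (x + 1))\<^sup>2)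
      = F' / (P * G'\<^sup>2) * (2 * x + 3) / (2 * x + 2)"
    if "P > 0" "G' > 0" "x \<ge> 0" for F' P G' x :: real
  proof -
    have "F' * (2 * x + 2) * (2 * x + 3) / (4 * P * (G' * (x + 1))\<^sup>2)
        = (F' * (2 * x + 3)) * (2 * (x + 1)) / ((P * G'\<^sup>2 * (2 * x + 2)) * (2 * (x + 1)))"
      by (simp add: power2_eq_square algebra_simps)
    also have "\<dots> = F' / (P * G'\<^sup>2) * (2 * x + 3) / (2 * x + 2)"
      using that by (subst mult_divide_mult_cancel_right) auto
    finally show ?thesis .
  qed
  show ?thesis
    unfolding tcoeff_def F G power_Suc by (rule cancel) auto
qed

lemma tcoeff_pochhammer: "tcoeff j = pochhammer (3/2) j / fact j"
proof (induction j)
  case 0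
  then show ?case by (simp add: tcoeff_def)
next
  case (Suc j)
  have "pochhammer (3/2) (Suc j) / fact (Suc j)
      = pochhammer (3/2) j / fact j * ((3/2 + real j) / (real j + 1))"
    by (simp add: pochhammer_Suc fact_Suc field_simps)
  also have "\<dots> = tcoeff (Suc j)"
    unfolding Suc.IH[symmetric] tcoeff_Suc by (simp add: field_simps)
  finally show ?case ..
qed

lemma pochhammer_5_2_eq_tcoeff: "pochhammer (5/2) j / fact j = tcoeff j * (2 * real j + 3) / 3"
proof -
  have "pochhammer (3/2::real) (Suc j) = 3/2 * pochhammer (5/2) j"
    by (simp add: pochhammer_rec)
  then have "pochhammer (5/2::real) j = 2/3 * pochhammer (3/2) (Suc j)"
    by simp
  also have "pochhammer (3/2::real) (Suc j) = tcoeff (Suc j) * fact (Suc j)"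
    by (simp add: tcoeff_pochhammer)
  finally have "pochhammer (5/2::real) j / fact j = 2/3 * tcoeff (Suc j) * (real j + 1)"
    by (simp add: fact_Suc field_simps)
  also have "\<dots> = tcoeff j * (2 * real j + 3) / 3"
    by (simp add: tcoeff_Suc field_simps)
  finally show ?thesis .
qed

lemma tcoeff_sq_le: "(tcoeff j)\<^sup>2 \<le> 2 * real j + 1"
proof (induction j)
  case 0
  then show ?case by (simp add: tcoeff_def)
next
  case (Suc j)
  have "(tcoeff (Suc j))\<^sup>2 = (tcoeff j)\<^sup>2 * (2 * real j + 3)\<^sup>2 / (2 * real j + 2)\<^sup>2"
    by (simp add: tcoeff_Suc power_mult_distrib power_divide)
  also have "\<dots> \<le> (2 * real j + 1) * (2 * real j + 3)\<^sup>2 / (2 * real j + 2)\<^sup>2"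
    by (intro divide_right_mono mult_right_mono Suc.IH) auto
  also have "\<dots> \<le> 2 * real (Suc j) + 1"
  proof -
    have "(2 * real j + 1) * (2 * real j + 3)\<^sup>2 \<le> (2 * real (Suc j) + 1) * (2 * real j + 2)\<^sup>2"
      by (simp add: power2_eq_square algebra_simps)
    then show ?thesis by (simp add: pos_divide_le_eq)
  qed
  finally show ?case .
qed

lemma tcoeff_le_sqrt: "tcoeff j \<le> sqrt (2 * real j + 1)"
  using tcoeff_sq_le by (rule real_le_rsqrt)

lemma tcoeff_le: "tcoeff j \<le> 2 * real j + 1"
proof -
  have "sqrt (2 * real j + 1) \<le> 2 * real j + 1"
    by (rule real_le_lsqrt) (simp_all add: power2_eq_square algebra_simps)
  with tcoeff_le_sqrt show ?thesis by (rule order_trans)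
qed

lemma gbinomial_minus_eq_tcoeff:
  "((-3/2) gchoose j) * (-x) ^ j = tcoeff j * x ^ j"
  "((-5/2) gchoose j) * (-x) ^ j = tcoeff j * (2 * real j + 3) / 3 * x ^ j"
proof -
  have sign: "(-1::real) ^ j * (-1) ^ j = 1"
    by (simp flip: power_mult_distrib)
  have "((-a) gchoose j) * (-x) ^ j = ((-1) ^ j * (-1) ^ j) * (pochhammer a j / fact j) * x ^ j" for a :: real
    by (simp add: gbinomial_pochhammer power_minus[of x] mult_ac)
  then have gchoose: "((-a) gchoose j) * (-x) ^ j = pochhammer a j / fact j * x ^ j" for a :: real
    unfolding sign by simp
  show "((-3/2) gchoose j) * (-x) ^ j = tcoeff j * x ^ j"
    using gchoose[of "3/2"] by (simp add: tcoeff_pochhammer)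
  show "((-5/2) gchoose j) * (-x) ^ j = tcoeff j * (2 * real j + 3) / 3 * x ^ j"
    using gchoose[of "5/2"] by (simp only: pochhammer_5_2_eq_tcoeff) simp
qed

lemma tcoeff_linear_sums:
  assumes "0 \<le> x" "x < 1"
  shows "(\<lambda>j. tcoeff j * (y * (2 * real j + 3) + z) * x ^ j)
           sums (3 * y * (1 - x) powr (-5/2) + z * (1 - x) powr (-3/2))"
proof -
  have "(\<lambda>j. ((-5/2) gchoose j) * (-x) ^ j) sums (1 + (-x)) powr (-5/2)"
    and "(\<lambda>j. ((-3/2) gchoose j) * (-x) ^ j) sums (1 + (-x)) powr (-3/2)"
    using assms by (intro gen_binomial_real; simp)+
  then have "(\<lambda>j. tcoeff j * (2 * real j + 3) / 3 * x ^ j) sums (1 - x) powr (-5/2)"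
    and "(\<lambda>j. tcoeff j * x ^ j) sums (1 - x) powr (-3/2)"
    unfolding gbinomial_minus_eq_tcoeff by simp_all
  moreover from sums_mult[OF this(1), of 3]
  have "(\<lambda>j. tcoeff j * (2 * real j + 3) * x ^ j) sums (3 * (1 - x) powr (-5/2))"
    by simp
  ultimately have "(\<lambda>j. y * (tcoeff j * (2 * real j + 3) * x ^ j) + z * (tcoeff j * x ^ j))
                     sums (y * (3 * (1 - x) powr (-5/2)) + z * (1 - x) powr (-3/2))"
    by (intro sums_add sums_mult)
  then show ?thesis
    by (simp add: algebra_simps)
qed

lemma tcoeff_linear_bound:
  assumes "0 \<le> x"
  shows "\<bar>tcoeff j * (y * (2 * real j + 3) + z) * x ^ j\<bar>
           \<le> (6 * \<bar>y\<bar> + 2 * \<bar>z\<bar>) * (real j + 1)\<^sup>2 * x ^ j"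
proof -
  have "\<bar>y * (2 * real j + 3)\<bar> \<le> \<bar>y\<bar> * (3 * (real j + 1))"
    unfolding abs_mult by (intro mult_left_mono) auto
  moreover have "\<bar>z\<bar> \<le> \<bar>z\<bar> * (real j + 1)"
    by (simp add: mult_le_cancel_left1)
  ultimately have "\<bar>y * (2 * real j + 3) + z\<bar> \<le> \<bar>y\<bar> * (3 * (real j + 1)) + \<bar>z\<bar> * (real j + 1)"
    by (meson abs_triangle_ineq add_mono order_trans)
  then have "\<bar>y * (2 * real j + 3) + z\<bar> \<le> (3 * \<bar>y\<bar> + \<bar>z\<bar>) * (real j + 1)"
    by (simp add: algebra_simps)
  moreover have "\<bar>tcoeff j\<bar> \<le> 2 * (real j + 1)"
    using tcoeff_le[of j] tcoeff_pos[of j] by simp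
  ultimately have "\<bar>tcoeff j * (y * (2 * real j + 3) + z)\<bar>
      \<le> 2 * (real j + 1) * ((3 * \<bar>y\<bar> + \<bar>z\<bar>) * (real j + 1))"
    unfolding abs_mult by (intro mult_mono) auto
  then have "\<bar>tcoeff j * (y * (2 * real j + 3) + z)\<bar> * x ^ j
      \<le> 2 * (real j + 1) * ((3 * \<bar>y\<bar> + \<bar>z\<bar>) * (real j + 1)) * x ^ j"
    using assms by (intro mult_right_mono) auto
  also have "\<dots> = (6 * \<bar>y\<bar> + 2 * \<bar>z\<bar>) * (real j + 1)\<^sup>2 * x ^ j"
    by (simp add: power2_eq_square algebra_simps)
  finally show ?thesis
    using assms by (simp add: abs_mult)
qed

lemma sum_tcoeff_le:
  assumes "m \<ge> 1"
  shows "(\<Sum>j\<le>m. tcoeff j) \<le> 4 * real m powr (3/2)"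
proof -
  have "(\<Sum>j\<le>m. tcoeff j) \<le> of_nat (card {..m}) * sqrt (2 * real m + 1)"
  proof (rule sum_bounded_above)
    fix j assume "j \<in> {..m}"
    then show "tcoeff j \<le> sqrt (2 * real m + 1)"
      using tcoeff_le_sqrt[of j] by (simp add: order_trans)
  qed
  also have "\<dots> \<le> (2 * real m) * (2 * sqrt (real m))"
  proof (intro mult_mono)
    have "sqrt (2 * real m + 1) \<le> sqrt (4 * real m)"
      using assms by simp
    then show "sqrt (2 * real m + 1) \<le> 2 * sqrt (real m)"
      by (simp add: real_sqrt_mult)
  qed (use assms in auto)
  also have "\<dots> = 4 * real m powr (3/2)"
    using assms powr_add[of "real m" 1 "1/2"] by (simp add: powr_half_sqrt)
  finally show ?thesis .
qed

lemma MtM_sym: "MtM a b i j = MtM a b j i"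
  unfolding MtM_def Let_def by auto

lemma MtM_band: "i \<noteq> j \<Longrightarrow> j \<noteq> i + 2 \<Longrightarrow> i \<noteq> j + 2 \<Longrightarrow> MtM a b i j = 0"
  unfolding MtM_def Let_def by auto

lemma MtM_odd_diag:
  "MtM a b (2 * j + 1) (2 * j + 1)
     = (2 * (a\<^sup>2 + (cc a b)\<^sup>2) * (2 * real j + 3) + ((a - cc a b)\<^sup>2 - 4 * (a\<^sup>2 + (cc a b)\<^sup>2))) / cc a b"
  unfolding MtM_def Let_def by (simp add: algebra_simps)

lemma MtM_odd_offdiag:
  "MtM a b (2 * j + 1) (2 * j + 3) = (a\<^sup>2 - (cc a b)\<^sup>2) * sqrt ((2 * real j + 2) * (2 * real j + 3)) / cc a b"
  unfolding MtM_def Let_def by (simp add: algebra_simps)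

lemma nu_even: "even k \<Longrightarrow> nu a b k = 0"
  unfolding nu_def by simp

lemma power2_powr: "(x powr r)\<^sup>2 = x powr (2 * r)" for x r :: real
  by (simp only: power2_eq_square mult_2 powr_add)

definition nu_lead :: "real \<Rightarrow> real \<Rightarrow> real" where
  "nu_lead a b = (cc a b / a) powr (1/4) * sqrt a / (2 * cc a b) * (2 * cc a b / (a + cc a b)) powr (3/2)"

lemma nu_odd: "nu a b (2 * j + 1) = nu_lead a b * uu a b ^ j * sqrt (fact (2 * j + 1)) / (2 ^ j * fact j)"
  unfolding nu_def nu_lead_def by (simp add: Let_def)

lemma nu_odd_Suc:
  "nu a b (2 * j + 3) = nu a b (2 * j + 1) * uu a b * sqrt ((2 * real j + 2) * (2 * real j + 3)) / (2 * real j + 2)"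
proof -
  define q where "q = (2 * real j + 2) * (2 * real j + 3)"
  have "nu a b (2 * j + 3) = nu a b (2 * Suc j + 1)"
    by (rule arg_cong[where f = "nu a b"]) simp
  also have "\<dots> = nu_lead a b * uu a b ^ Suc j * sqrt (fact (2 * Suc j + 1)) / (2 ^ Suc j * fact (Suc j))"
    by (rule nu_odd)
  also have "(fact (2 * Suc j + 1) :: real) = fact (2 * j + 1) * q"
    unfolding q_def by (simp add: algebra_simps)
  also have "(2 ^ Suc j * fact (Suc j) :: real) = 2 ^ j * fact j * (2 * real j + 2)"
    by (simp add: algebra_simps)
  finally show ?thesis
    unfolding nu_odd q_def[symmetric] by (simp add: real_sqrt_mult mult_ac)
qed

text \<open>\<open>(nu a b (2 * j + 1))\<^sup>2 = nu_scale a b * tcoeff j * uu a b ^ (2 * j)\<close>. Parseval forces this value: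
  the squares \<open>(nu a b k)\<^sup>2\<close> add up to \<open>E\<^sub>\<mu>(x\<^sup>2) = 1/(4a)\<close>, see \<open>nu_scale_series\<close>.\<close>
definition nu_scale :: "real \<Rightarrow> real \<Rightarrow> real" where
  "nu_scale a b = (1 - (uu a b)\<^sup>2) powr (3/2) / (4 * a)"

lemma alpha_eta_orthogonal: "(\<Sum>k\<le>2 * m + 1. alpha a b m k * eta a b k) = 0"
  by (rule sum.neutral) (auto simp: alpha_def nu_def eta_def)

lemma alpha_quadratic_form:
  "(\<Sum>i\<le>2 * m + 1. \<Sum>j\<le>2 * m + 1. alpha a b m i * MtM a b i j * alpha a b m j)
     = (\<Sum>j\<le>m. (nu a b (2 * j + 1))\<^sup>2 * MtM a b (2 * j + 1) (2 * j + 1))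
       + 2 * (\<Sum>j<m. nu a b (2 * j + 1) * MtM a b (2 * j + 1) (2 * j + 3) * nu a b (2 * j + 3))"
proof -
  have "(\<Sum>i\<le>2 * m + 1. \<Sum>j\<le>2 * m + 1. alpha a b m i * MtM a b i j * alpha a b m j)
      = (\<Sum>i\<le>2 * m + 1. \<Sum>j\<le>2 * m + 1. nu a b i * MtM a b i j * nu a b j)"
    by (intro sum.cong refl) (simp add: alpha_def)
  also have "\<dots> = (\<Sum>i\<le>Suc (2 * m). nu a b i * MtM a b i i * nu a b i)
                   + 2 * (\<Sum>i<2 * m. nu a b i * MtM a b i (i + 2) * nu a b (i + 2))"
    using sum_quadratic_form_band[OF MtM_sym MtM_band, where v = "nu a b" and N = "2 * m + 1"] by simp
  also have "(\<Sum>i\<le>Suc (2 * m). nu a b i * MtM a b i i * nu a b i)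
      = (\<Sum>j\<le>m. (nu a b (2 * j + 1))\<^sup>2 * MtM a b (2 * j + 1) (2 * j + 1))"
    unfolding sum.in_pairs_0 by (simp add: nu_even power2_eq_square mult_ac)
  also have "(\<Sum>i<2 * m. nu a b i * MtM a b i (i + 2) * nu a b (i + 2))
      = (\<Sum>i<2 * m. if even i then 0 else nu a b i * MtM a b i (i + 2) * nu a b (i + 2))"
    by (intro sum.cong refl) (simp add: nu_even)
  also have "\<dots> = (\<Sum>j<m. nu a b (2 * j + 1) * MtM a b (2 * j + 1) (2 * j + 3) * nu a b (2 * j + 3))"
    unfolding sum_split_even_odd by (simp add: numeral_3_eq_3)
  finally show ?thesis .
qed

context
  fixes a b :: real
  assumes a: "a > 0" and b: "b > 0"
begin

lemma cc_sq: "(cc a b)\<^sup>2 = a\<^sup>2 + 2 * a * b"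
  unfolding cc_def using a b by simp

lemma cc_gt: "cc a b > a"
  unfolding cc_def using a b by (intro real_less_rsqrt) (simp add: power2_eq_square)

lemma uu_eq: "uu a b = (cc a b - a) / (cc a b + a)"
proof -
  have "b * (cc a b + a) = (cc a b - a) * (a + b + cc a b)"
    using cc_sq by (simp add: power2_eq_square algebra_simps)
  then show ?thesis
    unfolding uu_def using a b cc_gt by (simp add: field_simps)
qed

lemma uu_pos: "uu a b > 0" and uu_less_1: "uu a b < 1"
  unfolding uu_eq using cc_gt a by (auto simp: field_simps)

lemma one_minus_uu_sq: "1 - (uu a b)\<^sup>2 = 4 * a * cc a b / (a + cc a b)\<^sup>2"
proof -
  have "1 - ((cc a b - a) / (cc a b + a))\<^sup>2 = ((cc a b + a)\<^sup>2 - (cc a b - a)\<^sup>2) / (cc a b + a)\<^sup>2"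
    using a cc_gt by (simp add: power_divide field_simps)
  also have "\<dots> = 4 * a * cc a b / (a + cc a b)\<^sup>2"
    by (simp add: power2_eq_square algebra_simps)
  finally show ?thesis unfolding uu_eq .
qed

lemma nu_scale_eq: "nu_scale a b = (2 * sqrt a * sqrt (cc a b) / (a + cc a b)) ^ 3 / (4 * a)"
proof -
  define q where "q = 2 * sqrt a * sqrt (cc a b) / (a + cc a b)"
  have q: "q > 0"
    unfolding q_def using a cc_gt by simp
  have "1 - (uu a b)\<^sup>2 = q\<^sup>2"
    unfolding one_minus_uu_sq q_def using a cc_gt by (simp add: power_divide power_mult_distrib)
  then have "(1 - (uu a b)\<^sup>2) powr (3/2) = (q powr 2) powr (3/2)"
    using q by (simp add: powr_numeral)
  also have "\<dots> = q powr 3"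
    by (simp only: powr_powr) simp
  also have "q powr 3 = q ^ 3"
    using q by (simp add: powr_numeral)
  finally show ?thesis
    unfolding nu_scale_def q_def by simp
qed

lemma nu_scale_series:
  "nu_scale a b * (1 - (uu a b)\<^sup>2) powr (-3/2) = 1 / (4 * a)"
  "nu_scale a b * (1 - (uu a b)\<^sup>2) powr (-5/2) = (a + cc a b)\<^sup>2 / (16 * a\<^sup>2 * cc a b)"
proof -
  define w where "w = 1 - (uu a b)\<^sup>2"
  have w: "w > 0"
    unfolding w_def one_minus_uu_sq using a cc_gt by simp
  have "w powr (3/2) * w powr (-3/2) = 1"
    using w by (subst powr_add[symmetric]) simp
  then show "nu_scale a b * w powr (-3/2) = 1 / (4 * a)"
    unfolding nu_scale_def w_def[symmetric] by simp
  have "w powr (3/2) * w powr (-5/2) = w powr (-1)"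
    by (subst powr_add[symmetric]) simp
  also have "\<dots> = 1 / w"
    using w by (simp add: powr_minus_divide)
  finally have "w powr (3/2) * w powr (-5/2) = 1 / w" .
  then have "nu_scale a b * w powr (-5/2) = 1 / (4 * a * w)"
    unfolding nu_scale_def w_def[symmetric] by simp
  also have "\<dots> = (a + cc a b)\<^sup>2 / (16 * a\<^sup>2 * cc a b)"
    unfolding w_def one_minus_uu_sq using a cc_gt by (simp add: power2_eq_square)
  finally show "nu_scale a b * w powr (-5/2) = (a + cc a b)\<^sup>2 / (16 * a\<^sup>2 * cc a b)" .
qed

lemma nu_lead_sq: "(nu_lead a b)\<^sup>2 = nu_scale a b"
proof -
  define s t where "s = sqrt a" and "t = sqrt (cc a b)"
  have st: "s > 0" "t > 0" "a = s\<^sup>2" "cc a b = t\<^sup>2"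
    unfolding s_def t_def using a cc_gt by auto
  have "nu_lead a b = (t\<^sup>2 / s\<^sup>2) powr (1/4) * s / (2 * t\<^sup>2) * (2 * t\<^sup>2 / (s\<^sup>2 + t\<^sup>2)) powr (3/2)"
    unfolding nu_lead_def st(4) unfolding st(3) using st(1) by simp
  moreover have "((t\<^sup>2 / s\<^sup>2) powr (1/4))\<^sup>2 = t / s"
    using st(1,2) by (simp add: power2_powr powr_half_sqrt real_sqrt_divide)
  moreover have "((2 * t\<^sup>2 / (s\<^sup>2 + t\<^sup>2)) powr (3/2))\<^sup>2 = (2 * t\<^sup>2 / (s\<^sup>2 + t\<^sup>2)) ^ 3"
    using st(1,2) by (simp add: power2_powr powr_numeral)
  ultimately have "(nu_lead a b)\<^sup>2 = t / s * (s / (2 * t\<^sup>2))\<^sup>2 * (2 * t\<^sup>2 / (s\<^sup>2 + t\<^sup>2)) ^ 3"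
    by (simp add: power_mult_distrib power_divide)
  also have "\<dots> = (2 * s * t / (s\<^sup>2 + t\<^sup>2)) ^ 3 / (4 * s\<^sup>2)"
  proof -
    define S where "S = s\<^sup>2 + t\<^sup>2"
    have "S > 0"
      unfolding S_def using st(1,2) by (simp add: add_pos_pos)
    with st(1,2) show ?thesis
      unfolding S_def[symmetric] by (simp add: field_simps power2_eq_square power3_eq_cube)
  qed
  finally show ?thesis
    unfolding nu_scale_eq s_def t_def using a cc_gt by simp
qed

lemma nu_odd_sq: "(nu a b (2 * j + 1))\<^sup>2 = nu_scale a b * tcoeff j * ((uu a b)\<^sup>2) ^ j"
proof -
  have "((2::real) ^ j)\<^sup>2 = 4 ^ j"
    by (simp add: power2_eq_square flip: power_mult_distrib)
  then have F: "(sqrt (fact (2 * j + 1)))\<^sup>2 = tcoeff j * ((2 ^ j)\<^sup>2 * (fact j)\<^sup>2)"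
    by (simp add: tcoeff_def)
  have U: "(uu a b ^ j)\<^sup>2 = ((uu a b)\<^sup>2) ^ j"
    by (metis power_mult mult.commute)
  show ?thesis
    unfolding nu_odd nu_lead_sq[symmetric] power_divide power_mult_distrib F U by simp
qed

lemma nu_odd_diag_term:
  "(nu a b (2 * j + 1))\<^sup>2 * MtM a b (2 * j + 1) (2 * j + 1)
     = tcoeff j * (2 * nu_scale a b * (a\<^sup>2 + (cc a b)\<^sup>2) / cc a b * (2 * real j + 3)
         + nu_scale a b * ((a - cc a b)\<^sup>2 - 4 * (a\<^sup>2 + (cc a b)\<^sup>2)) / cc a b) * ((uu a b)\<^sup>2) ^ j"
  unfolding nu_odd_sq MtM_odd_diag using a cc_gt by (simp add: field_simps)

lemma nu_odd_offdiag_term: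
  "nu a b (2 * j + 1) * MtM a b (2 * j + 1) (2 * j + 3) * nu a b (2 * j + 3)
     = tcoeff j * (nu_scale a b * uu a b * (a\<^sup>2 - (cc a b)\<^sup>2) / cc a b * (2 * real j + 3)) * ((uu a b)\<^sup>2) ^ j"
proof -
  define q where "q = (2 * real j + 2) * (2 * real j + 3)"
  have "nu a b (2 * j + 1) * MtM a b (2 * j + 1) (2 * j + 3) * nu a b (2 * j + 3)
      = (nu a b (2 * j + 1))\<^sup>2 * uu a b * (a\<^sup>2 - (cc a b)\<^sup>2) / cc a b * (sqrt q * sqrt q / (2 * real j + 2))"
    unfolding nu_odd_Suc MtM_odd_offdiag q_def[symmetric] by (simp add: power2_eq_square mult_ac)
  also have "sqrt q * sqrt q / (2 * real j + 2) = 2 * real j + 3"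
    unfolding q_def by simp
  finally show ?thesis
    unfolding nu_odd_sq by (simp add: mult_ac)
qed

lemma quadratic_series_value:
  "3 * (2 * nu_scale a b * (a\<^sup>2 + (cc a b)\<^sup>2) / cc a b
          + 2 * (nu_scale a b * uu a b * (a\<^sup>2 - (cc a b)\<^sup>2) / cc a b)) * (1 - (uu a b)\<^sup>2) powr (-5/2)
   + nu_scale a b * ((a - cc a b)\<^sup>2 - 4 * (a\<^sup>2 + (cc a b)\<^sup>2)) / cc a b * (1 - (uu a b)\<^sup>2) powr (-3/2)
   = 1"
proof -
  define c K u W3 W5 where "c = cc a b" and "K = nu_scale a b" and "u = uu a b"
    and "W3 = (1 - (uu a b)\<^sup>2) powr (-3/2)" and "W5 = (1 - (uu a b)\<^sup>2) powr (-5/2)"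
  have c: "c > 0" unfolding c_def using a cc_gt by simp
  have KW: "K * W3 = 1 / (4 * a)" "K * W5 = (a + c)\<^sup>2 / (16 * a\<^sup>2 * c)"
    unfolding K_def W3_def W5_def c_def by (fact nu_scale_series)+
  have u: "u * (a\<^sup>2 - c\<^sup>2) = - (c - a)\<^sup>2"
    unfolding u_def uu_eq c_def[symmetric] using a c by (simp add: field_simps power2_eq_square)
  have "3 * (2 * K * (a\<^sup>2 + c\<^sup>2) / c + 2 * (K * u * (a\<^sup>2 - c\<^sup>2) / c)) * W5
        + K * ((a - c)\<^sup>2 - 4 * (a\<^sup>2 + c\<^sup>2)) / c * W3
      = 6 * (a\<^sup>2 + c\<^sup>2 + u * (a\<^sup>2 - c\<^sup>2)) * (K * W5) / c + ((a - c)\<^sup>2 - 4 * (a\<^sup>2 + c\<^sup>2)) * (K * W3) / c"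
    using c by (simp add: field_simps)
  also have "\<dots> = 1"
    unfolding KW u using a c by (simp add: field_simps power2_eq_square)
  finally show ?thesis
    unfolding c_def K_def u_def W3_def W5_def .
qed

lemma lam_odd: "lam a b (2 * j + 1) = sqrt (2 * a / (a + b + cc a b)) * uu a b * ((uu a b)\<^sup>2) ^ j"
  unfolding lam_def by (simp add: power_mult[symmetric] mult.commute[of 2])

lemma uu_sq_bounds: "0 \<le> (uu a b)\<^sup>2" "(uu a b)\<^sup>2 < 1"
  using uu_pos uu_less_1 by (simp_all add: power_less_one_iff abs_less_iff)

lemma nu_scale_nonneg: "nu_scale a b \<ge> 0"
  unfolding nu_scale_def using a by simp

lemma alpha_norm_bound:
  "\<exists>L. \<forall>m\<ge>1. \<bar>(\<Sum>k\<le>2 * m + 1. (alpha a b m k)\<^sup>2) - 1 / (4 * a)\<bar> \<le> L * real m * uu a b ^ (2 * m)"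
proof -
  define r where "r = (uu a b)\<^sup>2"
  have r: "0 \<le> r" "r < 1"
    unfolding r_def by (fact uu_sq_bounds)+
  define f where "f j = tcoeff j * (0 * (2 * real j + 3) + nu_scale a b) * r ^ j" for j
  have "f sums (1 / (4 * a))"
    using tcoeff_linear_sums[OF r, of 0 "nu_scale a b"] nu_scale_series(1)
    unfolding f_def r_def by simp
  moreover have "\<bar>f j\<bar> \<le> 2 * nu_scale a b * (real j + 1) ^ 1 * r ^ j" for j
  proof -
    have "nu_scale a b * r ^ j * tcoeff j \<le> nu_scale a b * r ^ j * (2 * (real j + 1))"
      using tcoeff_le[of j] nu_scale_nonneg r by (intro mult_left_mono) simp_all
    then show ?thesis
      using tcoeff_pos[of j] nu_scale_nonneg r by (simp add: f_def abs_mult algebra_simps)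
  qed
  ultimately obtain C where C: "\<forall>n\<ge>1. \<bar>1 / (4 * a) - (\<Sum>j\<le>n. f j)\<bar> \<le> C * real n ^ 1 * r ^ n"
    using poly_geometric_tail_bound[OF _ r] by blast
  have "(\<Sum>k\<le>2 * m + 1. (alpha a b m k)\<^sup>2) = (\<Sum>j\<le>m. f j)" for m
  proof -
    have "(\<Sum>k\<le>2 * m + 1. (alpha a b m k)\<^sup>2) = (\<Sum>k\<le>Suc (2 * m). (nu a b k)\<^sup>2)"
      by (intro sum.cong) (auto simp: alpha_def)
    also have "\<dots> = (\<Sum>j\<le>m. f j)"
      unfolding sum.in_pairs_0 using nu_odd_sq by (simp add: nu_even f_def r_def mult_ac)
    finally show ?thesis .
  qed
  then show ?thesis
    using C unfolding r_def by (intro exI[of _ C]) (simp add: abs_minus_commute power_mult)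
qed

lemma alpha_quadratic_bound:
  "\<exists>L. \<forall>m\<ge>1. \<bar>(\<Sum>i\<le>2 * m + 1. \<Sum>j\<le>2 * m + 1. alpha a b m i * MtM a b i j * alpha a b m j) - 1\<bar>
                 \<le> L * (real m)\<^sup>2 * uu a b ^ (2 * m)"
proof -
  define r where "r = (uu a b)\<^sup>2"
  have r: "0 \<le> r" "r < 1"
    unfolding r_def by (fact uu_sq_bounds)+
  define K c where "K = nu_scale a b" and "c = cc a b"
  define yd zd yo where "yd = 2 * K * (a\<^sup>2 + c\<^sup>2) / c" and "zd = K * ((a - c)\<^sup>2 - 4 * (a\<^sup>2 + c\<^sup>2)) / c"
    and "yo = K * uu a b * (a\<^sup>2 - c\<^sup>2) / c"
  define dg og where "dg j = tcoeff j * (yd * (2 * real j + 3) + zd) * r ^ j"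
    and "og j = tcoeff j * (yo * (2 * real j + 3) + 0) * r ^ j" for j
  have dg: "dg sums (3 * yd * (1 - r) powr (-5/2) + zd * (1 - r) powr (-3/2))"
    unfolding dg_def by (rule tcoeff_linear_sums[OF r])
  have og: "og sums (3 * yo * (1 - r) powr (-5/2) + 0 * (1 - r) powr (-3/2))"
    unfolding og_def by (rule tcoeff_linear_sums[OF r])
  have series_value: "(3 * yd * (1 - r) powr (-5/2) + zd * (1 - r) powr (-3/2))
               + 2 * (3 * yo * (1 - r) powr (-5/2) + 0 * (1 - r) powr (-3/2)) = 1"
    using quadratic_series_value
    unfolding yd_def zd_def yo_def K_def c_def r_def by (simp add: algebra_simps)
  have dg_bound: "\<bar>dg j\<bar> \<le> (6 * \<bar>yd\<bar> + 2 * \<bar>zd\<bar>) * (real j + 1)\<^sup>2 * r ^ j" for j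
    unfolding dg_def by (rule tcoeff_linear_bound[OF r(1)])
  have og_bound: "\<bar>og j\<bar> \<le> (6 * \<bar>yo\<bar> + 2 * \<bar>0\<bar>) * (real j + 1)\<^sup>2 * r ^ j" for j
    unfolding og_def by (rule tcoeff_linear_bound[OF r(1)])
  have quadratic_form: "(\<Sum>i\<le>2 * m + 1. \<Sum>j\<le>2 * m + 1. alpha a b m i * MtM a b i j * alpha a b m j)
      = (\<Sum>j\<le>m. dg j) + 2 * (\<Sum>j<m. og j)" for m
    unfolding alpha_quadratic_form nu_odd_diag_term nu_odd_offdiag_term
    by (simp add: dg_def og_def yd_def zd_def yo_def K_def c_def r_def)
  obtain C where "\<forall>n\<ge>1. \<bar>(\<Sum>j\<le>n. dg j) + 2 * (\<Sum>j<n. og j) - 1\<bar> \<le> C * real n ^ 2 * r ^ n"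
    using poly_geometric_tail_bound_combined[OF dg og r dg_bound og_bound, of 2]
    unfolding series_value by blast
  then show ?thesis
    unfolding quadratic_form r_def by (intro exI[of _ C]) (simp add: power_mult)
qed

lemma alpha_weighted_bound:
  "\<exists>L. \<forall>m\<ge>1. (\<Sum>k\<le>2 * m + 1. (alpha a b m k)\<^sup>2 / lam a b k) \<le> L * real m powr (3/2)"
proof -
  define P where "P = sqrt (2 * a / (a + b + cc a b)) * uu a b"
  have P: "P > 0"
    unfolding P_def using a b cc_gt uu_pos by simp
  have odd_term: "(nu a b (2 * j + 1))\<^sup>2 / lam a b (2 * j + 1) = nu_scale a b / P * tcoeff j" for j
    unfolding nu_odd_sq lam_odd using P uu_pos unfolding P_def by (simp add: field_simps)
  have eq: "(\<Sum>k\<le>2 * m + 1. (alpha a b m k)\<^sup>2 / lam a b k) = nu_scale a b / P * (\<Sum>j\<le>m. tcoeff j)" for m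
  proof -
    have "(\<Sum>k\<le>2 * m + 1. (alpha a b m k)\<^sup>2 / lam a b k) = (\<Sum>k\<le>Suc (2 * m). (nu a b k)\<^sup>2 / lam a b k)"
      by (intro sum.cong) (auto simp: alpha_def)
    also have "\<dots> = (\<Sum>j\<le>m. nu_scale a b / P * tcoeff j)"
      unfolding sum.in_pairs_0 using odd_term by (simp add: nu_even)
    finally show ?thesis
      by (simp add: sum_distrib_left)
  qed
  have nonneg: "0 \<le> nu_scale a b / P"
    using nu_scale_nonneg P by simp
  show ?thesis
  proof (intro exI[of _ "4 * nu_scale a b / P"] allI impI)
    fix m :: nat
    assume "m \<ge> 1"
    with nonneg have "nu_scale a b / P * (\<Sum>j\<le>m. tcoeff j) \<le> nu_scale a b / P * (4 * real m powr (3/2))"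
      by (intro mult_left_mono sum_tcoeff_le)
    then show "(\<Sum>k\<le>2 * m + 1. (alpha a b m k)\<^sup>2 / lam a b k) \<le> 4 * nu_scale a b / P * real m powr (3/2)"
      unfolding eq by (simp add: mult_ac)
  qed
qed

lemma threshold_ge_1:
  assumes "real m \<ge> max (- 3 / (4 * ln (uu a b))) (1 / (6 * cc a b))"
  shows "m \<ge> 1"
proof -
  have "ln (uu a b) < 0"
    using uu_pos uu_less_1 by simp
  then have "- 3 / (4 * ln (uu a b)) > 0"
    by (simp add: divide_pos_neg)
  moreover have "- 3 / (4 * ln (uu a b)) \<le> real m"
    using assms by simp
  ultimately have "real m > 0"
    by linarith
  then show ?thesis
    by simp
qed

end

theorem mainTheorem16:
  fixes a b :: real
  assumes "a > 0" and "b > 0"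
  shows "\<exists>L>0. \<forall>m::nat.
     real m \<ge> max (- 3 / (4 * ln (uu a b))) (1 / (6 * cc a b)) \<longrightarrow>
       \<bar>(\<Sum>k\<le>2*m+1. (alpha a b m k)^2) - 1/(4*a)\<bar> \<le> L * real m * uu a b ^ (2*m)
     \<and> (\<Sum>k\<le>2*m+1. alpha a b m k * eta a b k) = 0
     \<and> \<bar>(\<Sum>i\<le>2*m+1. \<Sum>j\<le>2*m+1. alpha a b m i * MtM a b i j * alpha a b m j) - 1\<bar>
          \<le> L * (real m)^2 * uu a b ^ (2*m)
     \<and> (\<Sum>k\<le>2*m+1. (alpha a b m k)^2 / lam a b k) \<le> L * real m powr (3/2)"
proof -
  obtain L1 where L1: "\<forall>m\<ge>1. \<bar>(\<Sum>k\<le>2*m+1. (alpha a b m k)^2) - 1/(4*a)\<bar> \<le> L1 * real m * uu a b ^ (2*m)"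
    using alpha_norm_bound[OF assms] by blast
  obtain L3 where L3: "\<forall>m\<ge>1. \<bar>(\<Sum>i\<le>2*m+1. \<Sum>j\<le>2*m+1. alpha a b m i * MtM a b i j * alpha a b m j) - 1\<bar>
                          \<le> L3 * (real m)^2 * uu a b ^ (2*m)"
    using alpha_quadratic_bound[OF assms] by blast
  obtain L4 where L4: "\<forall>m\<ge>1. (\<Sum>k\<le>2*m+1. (alpha a b m k)^2 / lam a b k) \<le> L4 * real m powr (3/2)"
    using alpha_weighted_bound[OF assms] by blast
  define L where "L = 1 + \<bar>L1\<bar> + \<bar>L3\<bar> + \<bar>L4\<bar>"
  have enlarge: "X \<le> L' * t \<Longrightarrow> L' \<le> L \<Longrightarrow> 0 \<le> t \<Longrightarrow> X \<le> L * t" for X L' t :: real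
    by (meson mult_right_mono order_trans)
  show ?thesis
  proof (intro exI[of _ L] conjI allI impI)
    fix m :: nat
    assume "real m \<ge> max (- 3 / (4 * ln (uu a b))) (1 / (6 * cc a b))"
    then have m: "m \<ge> 1" by (rule threshold_ge_1[OF assms])
    have u: "uu a b > 0" by (rule uu_pos[OF assms])
    show "\<bar>(\<Sum>k\<le>2*m+1. (alpha a b m k)^2) - 1/(4*a)\<bar> \<le> L * real m * uu a b ^ (2*m)"
      using enlarge[of _ L1 "real m * uu a b ^ (2*m)"] L1 m u by (simp add: L_def mult.assoc)
    show "\<bar>(\<Sum>i\<le>2*m+1. \<Sum>j\<le>2*m+1. alpha a b m i * MtM a b i j * alpha a b m j) - 1\<bar>
          \<le> L * (real m)^2 * uu a b ^ (2*m)"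
      using enlarge[of _ L3 "(real m)^2 * uu a b ^ (2*m)"] L3 m u by (simp add: L_def mult.assoc)
    show "(\<Sum>k\<le>2*m+1. (alpha a b m k)^2 / lam a b k) \<le> L * real m powr (3/2)"
      using enlarge[of _ L4 "real m powr (3/2)"] L4 m by (simp add: L_def)
    show "(\<Sum>k\<le>2*m+1. alpha a b m k * eta a b k) = 0"
      by (rule alpha_eta_orthogonal)
  qed (simp add: L_def)
qed

end
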